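(* For $n\ge1$ let $Z_n$ be the value in the top cell of a uniformly random element of $\mathcal{C}^*_{n,1}$, i.e. $\mathbb{P}(Z_n=m)=\frac{[t^nx^m]V(t,x)}{[t^n]V(t,1)}$. Then $Z_n/(2n)$ converges in law to a random variable $Z$ uniformly distributed on $[0,1]$ (density $1$ on $[0,1]$, $0$ otherwise), whose moments are $\mathbb{E}(Z^r)=\frac{1}{r+1}$.
   Context: For $n\ge 0$, let $\mathcal{C}^*_{n,1}$ be the set of fillings, bijectively with $1,\dots,2n+1$, of the three-row shape having one top-row cell in column $1$, middle-row cells in columns $1,\dots,n$ and bottom-row cells in columns $1,\dots,n$, with entries increasing from left to right along the middle row and from bottom to top within each column, and no condition among bottom-row entries. $v_{n,i}$ is the number of elements of $\mathcal{C}^*_{n,1}$ whose top cell contains $i$, and $V(t,x)=\sum_{n,i\ge0}v_{n,i}\frac{t^n}{n!}x^i$. *)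

theory Defs
  imports "HOL-Probability.Probability"
begin

text \<open>Cells of the three-row shape: one top cell (column 1), middle-row cells
  Mid j and bottom-row cells Bot j for columns j = 1..n.\<close>
datatype cell = Top | Mid nat | Bot nat

definition cells :: "nat \<Rightarrow> cell set" where
  "cells n = {Top} \<union> Mid ` {1..n} \<union> Bot ` {1..n}"

definition Cstar :: "nat \<Rightarrow> (cell \<Rightarrow> nat) set" where
  "Cstar n = {f \<in> cells n \<rightarrow>\<^sub>E {1..2*n+1}.
      bij_betw f (cells n) {1..2*n+1}
    \<and> (\<forall>j\<in>{1..<n}. f (Mid j) < f (Mid (Suc j)))
    \<and> (\<forall>j\<in>{1..n}. f (Bot j) < f (Mid j))
    \<and> (1 \<le> n \<longrightarrow> f (Mid 1) < f Top)}"

definition v :: "nat \<Rightarrow> nat \<Rightarrow> nat" where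
  "v n i = card {f \<in> Cstar n. f Top = i}"

text \<open>Coefficients of V(t,x) = sum v_{n,i} t^n/n! x^i.\<close>
definition V_coeff :: "nat \<Rightarrow> nat \<Rightarrow> real" where
  "V_coeff n m = real (v n m) / fact n"

text \<open>[t^n] V(t,1) = sum over i of v_{n,i}/n! (only i \<le> 2n+1 contribute).\<close>
definition V1_coeff :: "nat \<Rightarrow> real" where
  "V1_coeff n = (\<Sum>i\<le>2*n+1. V_coeff n i)"

definition Z_law :: "nat \<Rightarrow> nat measure" where
  "Z_law n = density (count_space UNIV) (\<lambda>m. ennreal (V_coeff n m / V1_coeff n))"

definition Z_scaled_law :: "nat \<Rightarrow> real measure" where
  "Z_scaled_law n = distr (Z_law n) borel (\<lambda>m. real m / (2 * real n))"

end

theory Submission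
  imports Defs "HOL-Real_Asymp.Real_Asymp"
begin

text \<open>Let \<open>T\<^sub>n\<close> be the fillings whose top cell holds the largest value \<open>2n+1\<close>. Moving the
  value \<open>i\<close> to the top by a cyclic shift of the values \<open>i, \<dots>, 2n+1\<close> identifies the fillings
  with top entry \<open>i\<close> with the \<open>f \<in> T\<^sub>n\<close> satisfying \<open>f (Mid 1) < i\<close>; hence
  \<open>(\<Sum>i=1..K. v n i) = (\<Sum>f\<in>T\<^sub>n. K - f (Mid 1))\<close>. Removing the last column, and remembering
  its bottom entry, is a bijection \<open>T\<^sub>m\<^sub>+\<^sub>1 \<cong> T\<^sub>m \<times> {1..2m+1}\<close>; so the mean \<open>\<mu>\<^sub>n\<close> of
  \<open>f (Mid 1)\<close> over \<open>T\<^sub>n\<close> satisfies \<open>\<mu>\<^sub>1 = 2\<close> and \<open>\<mu>\<^sub>m\<^sub>+\<^sub>1 = (2m+2)/(2m+1) \<mu>\<^sub>m\<close>,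
  whence \<open>\<mu>\<^sub>n \<le> 2\<surd>n = o(n)\<close>. Therefore \<open>P(Z\<^sub>n \<le> K)\<close> lies between \<open>(K - \<mu>\<^sub>n)/(2n+1)\<close>
  and \<open>K/(2n+1-\<mu>\<^sub>n)\<close>, and the distribution function of \<open>Z\<^sub>n/(2n)\<close> tends to \<open>min x 1\<close>
  for \<open>x \<ge> 0\<close>, which is that of the uniform law.\<close>

lemma finite_cells [simp]: "finite (cells n)"
  unfolding cells_def by auto

lemma Top_in_cells [simp]: "Top \<in> cells n"
  by (simp add: cells_def)

lemma Mid_in_cells_iff [simp]: "Mid j \<in> cells n \<longleftrightarrow> 1 \<le> j \<and> j \<le> n"
  by (auto simp: cells_def)

lemma Bot_in_cells_iff [simp]: "Bot j \<in> cells n \<longleftrightarrow> 1 \<le> j \<and> j \<le> n"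
  by (auto simp: cells_def)

lemma cells_0: "cells 0 = {Top}"
  by (simp add: cells_def)

lemma cells_Suc: "cells (Suc m) = insert (Mid (Suc m)) (insert (Bot (Suc m)) (cells m))"
  unfolding cells_def by (auto simp: atLeastAtMostSuc_conv)

lemma card_cells: "card (cells n) = 2 * n + 1"
proof (induction n)
  case (Suc m)
  have "Mid (Suc m) \<notin> cells m" "Bot (Suc m) \<notin> cells m"
    by simp_all
  then show ?case
    using Suc by (simp add: cells_Suc)
qed (simp add: cells_0)

lemma Cstar_iff:
  "f \<in> Cstar n \<longleftrightarrow> f \<in> cells n \<rightarrow>\<^sub>E {1..2*n+1} \<and> inj_on f (cells n)
    \<and> (\<forall>j\<in>{1..<n}. f (Mid j) < f (Mid (Suc j)))
    \<and> (\<forall>j\<in>{1..n}. f (Bot j) < f (Mid j))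
    \<and> (1 \<le> n \<longrightarrow> f (Mid 1) < f Top)"
proof -
  have "bij_betw f (cells n) {1..2*n+1} \<longleftrightarrow> inj_on f (cells n)"
    if f: "f \<in> cells n \<rightarrow>\<^sub>E {1..2*n+1}"
  proof
    assume inj: "inj_on f (cells n)"
    have "f ` cells n \<subseteq> {1..2*n+1}"
      using f by auto
    moreover have "card (f ` cells n) = card {1..2*n+1}"
      using card_image[OF inj] by (simp add: card_cells)
    ultimately show "bij_betw f (cells n) {1..2*n+1}"
      using inj by (simp add: bij_betw_def card_subset_eq)
  qed (rule bij_betw_imp_inj_on)
  then show ?thesis
    unfolding Cstar_def by blast
qed

lemma CstarI:
  assumes "f \<in> cells n \<rightarrow>\<^sub>E {1..2*n+1}" "inj_on f (cells n)"
    "\<And>j. 1 \<le> j \<Longrightarrow> j < n \<Longrightarrow> f (Mid j) < f (Mid (Suc j))"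
    "\<And>j. 1 \<le> j \<Longrightarrow> j \<le> n \<Longrightarrow> f (Bot j) < f (Mid j)"
    "1 \<le> n \<Longrightarrow> f (Mid 1) < f Top"
  shows "f \<in> Cstar n"
  using assms by (simp add: Cstar_iff)

lemma finite_Cstar: "finite (Cstar n)"
proof (rule finite_subset)
  show "Cstar n \<subseteq> cells n \<rightarrow>\<^sub>E {1..2*n+1}"
    by (auto simp: Cstar_def)
qed (simp add: finite_PiE)

context
  fixes f n
  assumes f: "f \<in> Cstar n"
begin

lemma Cstar_in_range: "x \<in> cells n \<Longrightarrow> f x \<in> {1..2*n+1}"
  using f by (auto simp: Cstar_iff)

lemma Cstar_undefined: "x \<notin> cells n \<Longrightarrow> f x = undefined"
  using f by (auto simp: Cstar_iff)

lemma Cstar_inj_on: "inj_on f (cells n)"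
  using f by (simp add: Cstar_iff)

lemma Cstar_eq_iff: "x \<in> cells n \<Longrightarrow> y \<in> cells n \<Longrightarrow> f x = f y \<longleftrightarrow> x = y"
  using Cstar_inj_on by (auto dest: inj_onD)

lemma Cstar_image: "f ` cells n = {1..2*n+1}"
  using f by (simp add: Cstar_def bij_betw_def)

lemma Cstar_Mid_less_Suc: "1 \<le> j \<Longrightarrow> j < n \<Longrightarrow> f (Mid j) < f (Mid (Suc j))"
  using f by (simp add: Cstar_iff)

lemma Cstar_Bot_less_Mid: "1 \<le> j \<Longrightarrow> j \<le> n \<Longrightarrow> f (Bot j) < f (Mid j)"
  using f by (simp add: Cstar_iff)

lemma Cstar_Mid_1_less_Top: "1 \<le> n \<Longrightarrow> f (Mid 1) < f Top"
  using f by (simp add: Cstar_iff)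

lemma Cstar_Mid_mono:
  assumes "1 \<le> j" "j \<le> k" "k \<le> n"
  shows "f (Mid j) \<le> f (Mid k)"
  using assms(2,3)
proof (induction k rule: dec_induct)
  case (step k)
  then show ?case
    using Cstar_Mid_less_Suc[of k] assms(1) by simp
qed simp

lemma Cstar_le_Mid_last: "x \<in> cells n \<Longrightarrow> x \<noteq> Top \<Longrightarrow> f x \<le> f (Mid n)"
  using Cstar_Mid_mono[of _ n] Cstar_Bot_less_Mid by (fastforce simp: cells_def)

end

definition relabel :: "(nat \<Rightarrow> nat) \<Rightarrow> nat \<Rightarrow> (cell \<Rightarrow> nat) \<Rightarrow> cell \<Rightarrow> nat" where
  "relabel \<phi> n f = restrict (\<phi> \<circ> f) (cells n)"

lemma relabel_apply [simp]: "x \<in> cells n \<Longrightarrow> relabel \<phi> n f x = \<phi> (f x)"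
  by (simp add: relabel_def)

lemma relabel_in_Cstar:
  assumes f: "f \<in> Cstar n"
    and into: "\<phi> ` {1..2*n+1} \<subseteq> {1..2*n+1}" and inj: "inj_on \<phi> {1..2*n+1}"
    and mono: "\<And>a b. a \<in> {1..2*n+1} - {f Top} \<Longrightarrow> b \<in> {1..2*n+1} - {f Top} \<Longrightarrow> a < b \<Longrightarrow> \<phi> a < \<phi> b"
    and top: "1 \<le> n \<Longrightarrow> \<phi> (f (Mid 1)) < \<phi> (f Top)"
  shows "relabel \<phi> n f \<in> Cstar n"
proof (rule CstarI)
  have range: "f x \<in> {1..2*n+1}" if "x \<in> cells n" for x
    using Cstar_in_range[OF f that] .
  have below_top: "f x \<in> {1..2*n+1} - {f Top}" if "x \<in> cells n" "x \<noteq> Top" for x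
    using range[OF that(1)] Cstar_eq_iff[OF f that(1), of Top] that(2) by simp
  show "relabel \<phi> n f \<in> cells n \<rightarrow>\<^sub>E {1..2*n+1}"
    using range into by (auto simp: relabel_def)
  show "inj_on (relabel \<phi> n f) (cells n)"
  proof (rule inj_onI)
    fix x y
    assume xy: "x \<in> cells n" "y \<in> cells n" and "relabel \<phi> n f x = relabel \<phi> n f y"
    then have "f x = f y"
      using inj range by (auto dest: inj_onD)
    then show "x = y"
      using Cstar_eq_iff[OF f xy] by simp
  qed
  show "relabel \<phi> n f (Mid j) < relabel \<phi> n f (Mid (Suc j))" if "1 \<le> j" "j < n" for j
    using that mono below_top Cstar_Mid_less_Suc[OF f that] by simp
  show "relabel \<phi> n f (Bot j) < relabel \<phi> n f (Mid j)" if "1 \<le> j" "j \<le> n" for j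
    using that mono below_top Cstar_Bot_less_Mid[OF f that] by simp
  show "relabel \<phi> n f (Mid 1) < relabel \<phi> n f Top" if "1 \<le> n"
    using that top by simp
qed

lemma relabel_relabel:
  assumes f: "f \<in> Cstar n" and inverse: "\<And>y. y \<in> {1..2*n+1} \<Longrightarrow> \<psi> (\<phi> y) = y"
  shows "relabel \<psi> n (relabel \<phi> n f) = f"
proof
  fix x
  show "relabel \<psi> n (relabel \<phi> n f) x = f x"
    using inverse Cstar_in_range[OF f] Cstar_undefined[OF f]
    by (cases "x \<in> cells n") (auto simp: relabel_def)
qed

definition Cstar_topmax :: "nat \<Rightarrow> (cell \<Rightarrow> nat) set" where
  "Cstar_topmax n = {f \<in> Cstar n. f Top = 2*n+1}"

lemma finite_Cstar_topmax: "finite (Cstar_topmax n)"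
  using finite_Cstar[of n] by (simp add: Cstar_topmax_def)

lemma Cstar_topmax_below_top:
  assumes f: "f \<in> Cstar_topmax n" and x: "x \<in> cells n" "x \<noteq> Top"
  shows "f x \<in> {1..2*n}"
proof -
  have "f \<in> Cstar n" "f Top = 2*n+1"
    using f by (simp_all add: Cstar_topmax_def)
  then show ?thesis
    using Cstar_in_range[of f n x] Cstar_eq_iff[of f n x Top] x by auto
qed

lemma Cstar_topmax_Mid_last:
  assumes f: "f \<in> Cstar_topmax n" and n: "1 \<le> n"
  shows "f (Mid n) = 2*n"
proof -
  have fC: "f \<in> Cstar n" "f Top = 2*n+1"
    using f by (simp_all add: Cstar_topmax_def)
  have "2*n \<in> f ` cells n"
    using Cstar_image[OF fC(1)] n by simp
  then obtain c where c: "c \<in> cells n" "f c = 2*n"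
    by (auto simp del: Mid_in_cells_iff Bot_in_cells_iff)
  have "c \<noteq> Top"
    using c fC(2) by auto
  then have "2*n \<le> f (Mid n)"
    using Cstar_le_Mid_last[OF fC(1) c(1)] c(2) by simp
  moreover have "f (Mid n) \<le> 2*n"
    using Cstar_topmax_below_top[OF f, of "Mid n"] n by simp
  ultimately show ?thesis
    by simp
qed

definition rotate_to_top :: "nat \<Rightarrow> nat \<Rightarrow> nat \<Rightarrow> nat" where
  "rotate_to_top n i y = (if y = i then 2*n+1 else if i < y then y - 1 else y)"

definition rotate_from_top :: "nat \<Rightarrow> nat \<Rightarrow> nat \<Rightarrow> nat" where
  "rotate_from_top n i y = (if y = 2*n+1 then i else if i \<le> y then y + 1 else y)"

lemma rotate_to_top_in_Cstar_topmax:
  assumes f: "f \<in> Cstar n" and n: "1 \<le> n" and top: "f Top = i"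
  shows "relabel (rotate_to_top n i) n f \<in> Cstar_topmax n"
    and "relabel (rotate_to_top n i) n f (Mid 1) < i"
proof -
  have i: "i \<in> {1..2*n+1}"
    using Cstar_in_range[OF f, of Top] top by simp
  have Mid_1: "f (Mid 1) < i"
    using Cstar_Mid_1_less_Top[OF f n] top by simp
  have "relabel (rotate_to_top n i) n f \<in> Cstar n"
  proof (rule relabel_in_Cstar[OF f])
    show "inj_on (rotate_to_top n i) {1..2*n+1}"
      using i by (auto simp: rotate_to_top_def inj_on_def split: if_splits)
  qed (use i top Mid_1 n in \<open>auto simp: rotate_to_top_def\<close>)
  then show "relabel (rotate_to_top n i) n f \<in> Cstar_topmax n"
    using top by (simp add: Cstar_topmax_def rotate_to_top_def)
  show "relabel (rotate_to_top n i) n f (Mid 1) < i"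
    using Mid_1 n by (simp add: rotate_to_top_def)
qed

lemma rotate_from_top_in_Cstar:
  assumes f: "f \<in> Cstar_topmax n" and i: "i \<in> {1..2*n+1}" and Mid_1: "f (Mid 1) < i"
  shows "relabel (rotate_from_top n i) n f \<in> Cstar n"
    and "relabel (rotate_from_top n i) n f Top = i"
proof -
  have fC: "f \<in> Cstar n" "f Top = 2*n+1"
    using f by (simp_all add: Cstar_topmax_def)
  show "relabel (rotate_from_top n i) n f \<in> Cstar n"
  proof (rule relabel_in_Cstar[OF fC(1)])
    show "inj_on (rotate_from_top n i) {1..2*n+1}"
      using i by (auto simp: rotate_from_top_def inj_on_def split: if_splits)
  qed (use i fC Mid_1 in \<open>auto simp: rotate_from_top_def\<close>)
  show "relabel (rotate_from_top n i) n f Top = i"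
    using fC(2) by (simp add: rotate_from_top_def)
qed

lemma bij_betw_rotate_to_top:
  assumes n: "1 \<le> n" and i: "i \<in> {1..2*n+1}"
  shows "bij_betw (relabel (rotate_to_top n i) n)
    {f \<in> Cstar n. f Top = i} {f \<in> Cstar_topmax n. f (Mid 1) < i}"
proof (rule bij_betw_byWitness[where f' = "relabel (rotate_from_top n i) n"])
  show "\<forall>f\<in>{f \<in> Cstar n. f Top = i}. relabel (rotate_from_top n i) n (relabel (rotate_to_top n i) n f) = f"
    using i by (auto intro!: relabel_relabel simp: rotate_to_top_def rotate_from_top_def)
  show "\<forall>f\<in>{f \<in> Cstar_topmax n. f (Mid 1) < i}.
      relabel (rotate_to_top n i) n (relabel (rotate_from_top n i) n f) = f"
    using i by (auto intro!: relabel_relabel simp: rotate_to_top_def rotate_from_top_def Cstar_topmax_def)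
qed (use rotate_to_top_in_Cstar_topmax[OF _ n] rotate_from_top_in_Cstar[OF _ i] in auto)

lemma v_eq_card_Mid_1_less:
  assumes "1 \<le> n" "i \<in> {1..2*n+1}"
  shows "v n i = card {f \<in> Cstar_topmax n. f (Mid 1) < i}"
  unfolding v_def using bij_betw_same_card[OF bij_betw_rotate_to_top[OF assms]] .

lemma v_eq_0:
  assumes "i \<notin> {1..2*n+1}"
  shows "v n i = 0"
proof -
  have no_filling: "{f \<in> Cstar n. f Top = i} = {}"
    using assms Cstar_in_range[of _ n Top] by auto
  show ?thesis
    unfolding v_def no_filling by simp
qed

definition shift_from :: "nat \<Rightarrow> nat \<Rightarrow> nat" where
  "shift_from b y = (if y < b then y else Suc y)"

definition unshift_from :: "nat \<Rightarrow> nat \<Rightarrow> nat" where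
  "unshift_from b y = (if y < b then y else y - 1)"

lemma shift_from_less_iff [simp]: "shift_from b y < shift_from b z \<longleftrightarrow> y < z"
  by (simp add: shift_from_def)

lemma shift_from_eq_iff [simp]: "shift_from b y = shift_from b z \<longleftrightarrow> y = z"
  by (simp add: shift_from_def)

lemma unshift_from_shift_from [simp]: "unshift_from b (shift_from b y) = y"
  by (simp add: shift_from_def unshift_from_def)

lemma shift_from_unshift_from [simp]: "y \<noteq> b \<Longrightarrow> shift_from b (unshift_from b y) = y"
  by (auto simp: shift_from_def unshift_from_def)

lemma unshift_from_less_iff:
  assumes "y \<noteq> b" "z \<noteq> b"
  shows "unshift_from b y < unshift_from b z \<longleftrightarrow> y < z"
  by (metis assms shift_from_less_iff shift_from_unshift_from)

lemma unshift_from_eq_iff: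
  assumes "y \<noteq> b" "z \<noteq> b"
  shows "unshift_from b y = unshift_from b z \<longleftrightarrow> y = z"
  by (metis assms shift_from_unshift_from)

definition add_column :: "nat \<Rightarrow> (cell \<Rightarrow> nat) \<times> nat \<Rightarrow> cell \<Rightarrow> nat" where
  "add_column m = (\<lambda>(g, b) x.
     if x = Top then 2*m+3 else if x = Mid (Suc m) then 2*m+2 else if x = Bot (Suc m) then b
     else if x \<in> cells m then shift_from b (g x) else undefined)"

definition remove_column :: "nat \<Rightarrow> (cell \<Rightarrow> nat) \<Rightarrow> (cell \<Rightarrow> nat) \<times> nat" where
  "remove_column m f =
     ((\<lambda>x. if x = Top then 2*m+1
           else if x \<in> cells m then unshift_from (f (Bot (Suc m))) (f x) else undefined),
      f (Bot (Suc m)))"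

lemma add_column_new_column [simp]:
  "add_column m (g, b) Top = 2*m+3" "add_column m (g, b) (Mid (Suc m)) = 2*m+2"
  "add_column m (g, b) (Bot (Suc m)) = b"
  by (simp_all add: add_column_def)

lemma add_column_old_cell:
  "x \<in> cells m \<Longrightarrow> x \<noteq> Top \<Longrightarrow> add_column m (g, b) x = shift_from b (g x)"
  by (auto simp: add_column_def)

lemma add_column_old_cell_range:
  assumes "g \<in> Cstar_topmax m" "b \<in> {1..2*m+1}" "x \<in> cells m" "x \<noteq> Top"
  shows "add_column m (g, b) x \<in> {1..2*m+1} - {b}"
  using Cstar_topmax_below_top[OF assms(1,3,4)] assms(2)
  by (auto simp: add_column_old_cell[OF assms(3,4)] shift_from_def)

lemma inj_on_add_column:
  assumes g: "g \<in> Cstar_topmax m" and b: "b \<in> {1..2*m+1}"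
  shows "inj_on (add_column m (g, b)) (cells (Suc m))"
proof -
  let ?h = "add_column m (g, b)"
  have "inj_on ?h (cells m - {Top})"
  proof (rule inj_onI)
    fix x y
    assume "x \<in> cells m - {Top}" "y \<in> cells m - {Top}" "?h x = ?h y"
    then show "x = y"
      using add_column_old_cell Cstar_eq_iff[of g m] g by (auto simp: Cstar_topmax_def)
  qed
  moreover have "inj_on ?h {Top, Mid (Suc m), Bot (Suc m)}"
    using b by auto
  moreover have "?h ` (cells m - {Top}) \<inter> ?h ` {Top, Mid (Suc m), Bot (Suc m)} = {}"
  proof -
    have "?h ` (cells m - {Top}) \<subseteq> {1..2*m+1} - {b}"
      using add_column_old_cell_range[OF g b] by auto
    moreover have "?h ` {Top, Mid (Suc m), Bot (Suc m)} = {2*m+3, 2*m+2, b}"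
      by simp
    ultimately show ?thesis
      by auto
  qed
  moreover have "cells (Suc m) = (cells m - {Top}) \<union> {Top, Mid (Suc m), Bot (Suc m)}"
    by (auto simp: cells_Suc)
  ultimately show ?thesis
    by (simp add: inj_on_Un Diff_triv)
qed

lemma add_column_in_Cstar_topmax:
  assumes g: "g \<in> Cstar_topmax m" and b: "b \<in> {1..2*m+1}"
  shows "add_column m (g, b) \<in> Cstar_topmax (Suc m)"
proof -
  let ?h = "add_column m (g, b)"
  have gC: "g \<in> Cstar m"
    using g by (simp add: Cstar_topmax_def)
  note old = add_column_old_cell and old_range = add_column_old_cell_range[OF g b]
  have "?h \<in> Cstar (Suc m)"
  proof (rule CstarI[OF _ inj_on_add_column[OF g b]])
    show "?h \<in> cells (Suc m) \<rightarrow>\<^sub>E {1..2 * Suc m + 1}"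
    proof (rule PiE_I)
      fix x
      assume "x \<in> cells (Suc m)"
      then consider "x \<in> {Top, Mid (Suc m), Bot (Suc m)}" | "x \<in> cells m" "x \<noteq> Top"
        by (auto simp: cells_Suc)
      then show "?h x \<in> {1..2 * Suc m + 1}"
      proof cases
        case 1
        then show ?thesis
          using b by auto
      next
        case 2
        then show ?thesis
          using old_range[of x] by auto
      qed
    qed (auto simp: add_column_def cells_Suc)
    show "?h (Mid j) < ?h (Mid (Suc j))" if "1 \<le> j" "j < Suc m" for j
    proof (cases "j = m")
      case True
      then show ?thesis
        using old_range[of "Mid j"] that by auto
    next
      case False
      then show ?thesis
        using old Cstar_Mid_less_Suc[OF gC, of j] that by simp
    qed
    show "?h (Bot j) < ?h (Mid j)" if "1 \<le> j" "j \<le> Suc m" for j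
      using old Cstar_Bot_less_Mid[OF gC, of j] that b by (cases "j = Suc m") auto
    show "?h (Mid 1) < ?h Top"
      using old_range[of "Mid 1"] by (cases "m = 0") auto
  qed
  then show ?thesis
    by (simp add: Cstar_topmax_def)
qed

lemma Cstar_topmax_Suc_Bot_last:
  assumes f: "f \<in> Cstar_topmax (Suc m)"
  shows "f (Bot (Suc m)) \<in> {1..2*m+1}"
  using Cstar_topmax_below_top[OF f, of "Bot (Suc m)"] Cstar_topmax_Mid_last[OF f]
    Cstar_eq_iff[of f "Suc m" "Bot (Suc m)" "Mid (Suc m)"] f
  by (auto simp: Cstar_topmax_def)

lemma Cstar_topmax_Suc_old_cell:
  assumes f: "f \<in> Cstar_topmax (Suc m)" and x: "x \<in> cells m" "x \<noteq> Top"
  shows "f x \<in> {1..2*m+1} - {f (Bot (Suc m))}"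
proof -
  have "f \<in> Cstar (Suc m)"
    using f by (simp add: Cstar_topmax_def)
  then show ?thesis
    using x Cstar_topmax_below_top[OF f, of x] Cstar_topmax_Mid_last[OF f]
      Cstar_eq_iff[of f "Suc m" x "Mid (Suc m)"] Cstar_eq_iff[of f "Suc m" x "Bot (Suc m)"]
    by (auto simp: cells_Suc)
qed

lemma remove_column_Top [simp]: "fst (remove_column m f) Top = 2*m+1"
  by (simp add: remove_column_def)

lemma remove_column_old_cell:
  "x \<in> cells m \<Longrightarrow> x \<noteq> Top \<Longrightarrow> fst (remove_column m f) x = unshift_from (f (Bot (Suc m))) (f x)"
  by (simp add: remove_column_def)

lemma remove_column_old_cell_range:
  assumes "f \<in> Cstar_topmax (Suc m)" "x \<in> cells m" "x \<noteq> Top"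
  shows "fst (remove_column m f) x \<in> {1..2*m}"
  using Cstar_topmax_Suc_old_cell[OF assms] Cstar_topmax_Suc_Bot_last[OF assms(1)]
  by (auto simp: remove_column_old_cell[OF assms(2,3)] unshift_from_def)

lemma remove_column_less_iff:
  assumes f: "f \<in> Cstar_topmax (Suc m)"
    and x: "x \<in> cells m" "x \<noteq> Top" and y: "y \<in> cells m" "y \<noteq> Top"
  shows "fst (remove_column m f) x < fst (remove_column m f) y \<longleftrightarrow> f x < f y"
  using Cstar_topmax_Suc_old_cell[OF f x] Cstar_topmax_Suc_old_cell[OF f y]
  by (simp add: remove_column_old_cell x y unshift_from_less_iff)

lemma inj_on_remove_column:
  assumes f: "f \<in> Cstar_topmax (Suc m)"
  shows "inj_on (fst (remove_column m f)) (cells m)"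
proof -
  let ?g = "fst (remove_column m f)"
  have "inj_on ?g (cells m - {Top})"
  proof (rule inj_onI)
    fix x y
    assume x: "x \<in> cells m - {Top}" and y: "y \<in> cells m - {Top}" and "?g x = ?g y"
    then have "f x = f y"
      using remove_column_old_cell Cstar_topmax_Suc_old_cell[OF f] unshift_from_eq_iff by auto
    then show "x = y"
      using Cstar_eq_iff[of f "Suc m" x y] f x y by (auto simp: cells_Suc Cstar_topmax_def)
  qed
  moreover have "?g Top \<notin> ?g ` (cells m - {Top})"
    using remove_column_old_cell_range[OF f] by fastforce
  ultimately show ?thesis
    using insert_Diff[OF Top_in_cells, of m] inj_on_insert[of ?g Top "cells m - {Top}"] by simp
qed

lemma remove_column_in_Cstar_topmax:
  assumes f: "f \<in> Cstar_topmax (Suc m)"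
  shows "remove_column m f \<in> Cstar_topmax m \<times> {1..2*m+1}"
proof -
  let ?g = "fst (remove_column m f)"
  have fC: "f \<in> Cstar (Suc m)"
    using f by (simp add: Cstar_topmax_def)
  note old_range = remove_column_old_cell_range[OF f] and less_iff = remove_column_less_iff[OF f]
  have "?g \<in> Cstar m"
  proof (rule CstarI[OF _ inj_on_remove_column[OF f]])
    show "?g \<in> cells m \<rightarrow>\<^sub>E {1..2*m+1}"
    proof (rule PiE_I)
      fix x
      assume "x \<in> cells m"
      then show "?g x \<in> {1..2*m+1}"
        using old_range[of x] by (cases "x = Top") auto
    qed (auto simp: remove_column_def)
    show "?g (Mid j) < ?g (Mid (Suc j))" if "1 \<le> j" "j < m" for j
      using that less_iff Cstar_Mid_less_Suc[OF fC, of j] by simp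
    show "?g (Bot j) < ?g (Mid j)" if "1 \<le> j" "j \<le> m" for j
      using that less_iff Cstar_Bot_less_Mid[OF fC, of j] by simp
    show "?g (Mid 1) < ?g Top" if "1 \<le> m"
      using that old_range[of "Mid 1"] by simp
  qed
  then show ?thesis
    using Cstar_topmax_Suc_Bot_last[OF f] by (simp add: Cstar_topmax_def mem_Times_iff remove_column_def)
qed

lemma remove_column_add_column:
  assumes g: "g \<in> Cstar_topmax m"
  shows "remove_column m (add_column m (g, b)) = (g, b)"
proof -
  have gC: "g \<in> Cstar m" "g Top = 2*m+1"
    using g by (simp_all add: Cstar_topmax_def)
  have "fst (remove_column m (add_column m (g, b))) x = g x" for x
    using gC Cstar_undefined[OF gC(1), of x]
    by (cases "x \<in> cells m") (auto simp: remove_column_def add_column_def)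
  then show ?thesis
    by (simp add: prod_eq_iff fun_eq_iff remove_column_def)
qed

lemma add_column_remove_column:
  assumes f: "f \<in> Cstar_topmax (Suc m)"
  shows "add_column m (remove_column m f) = f"
proof
  fix x
  have fC: "f \<in> Cstar (Suc m)" "f Top = 2*m+3"
    using f by (simp_all add: Cstar_topmax_def)
  show "add_column m (remove_column m f) x = f x"
  proof (cases "x \<in> cells m - {Top}")
    case True
    then have "f x \<noteq> f (Bot (Suc m))"
      using Cstar_topmax_Suc_old_cell[OF f] by auto
    with True show ?thesis
      by (auto simp: add_column_def remove_column_def)
  next
    case False
    then show ?thesis
      using fC Cstar_topmax_Mid_last[OF f] Cstar_undefined[OF fC(1), of x]
      by (auto simp: add_column_def remove_column_def cells_Suc)
  qed
qed

lemma bij_betw_add_column: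
  "bij_betw (add_column m) (Cstar_topmax m \<times> {1..2*m+1}) (Cstar_topmax (Suc m))"
proof (rule bij_betw_byWitness[where f' = "remove_column m"])
  show "\<forall>a\<in>Cstar_topmax m \<times> {1..2*m+1}. remove_column m (add_column m a) = a"
    using remove_column_add_column by auto
  show "\<forall>f\<in>Cstar_topmax (Suc m). add_column m (remove_column m f) = f"
    using add_column_remove_column by auto
  show "add_column m ` (Cstar_topmax m \<times> {1..2*m+1}) \<subseteq> Cstar_topmax (Suc m)"
    using add_column_in_Cstar_topmax by auto
  show "remove_column m ` Cstar_topmax (Suc m) \<subseteq> Cstar_topmax m \<times> {1..2*m+1}"
    using remove_column_in_Cstar_topmax by blast
qed

lemma card_Cstar_topmax_Suc: "card (Cstar_topmax (Suc m)) = (2*m+1) * card (Cstar_topmax m)"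
  using bij_betw_same_card[OF bij_betw_add_column[of m]] by (simp add: card_cartesian_product algebra_simps)

lemma card_Cstar_topmax_pos: "0 < card (Cstar_topmax n)"
proof (induction n)
  case 0
  let ?f = "\<lambda>x. if x = Top then 1 else undefined"
  have "?f \<in> Cstar 0"
    by (rule CstarI) (auto simp: cells_0)
  then have "?f \<in> Cstar_topmax 0"
    by (simp add: Cstar_topmax_def)
  then show ?case
    using finite_Cstar_topmax card_gt_0_iff by blast
qed (simp add: card_Cstar_topmax_Suc)

definition mean_Mid_1 :: "nat \<Rightarrow> real" where
  "mean_Mid_1 n = (\<Sum>f\<in>Cstar_topmax n. real (f (Mid 1))) / card (Cstar_topmax n)"

lemma mean_Mid_1_nonneg: "0 \<le> mean_Mid_1 n"
  by (simp add: mean_Mid_1_def sum_nonneg)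

lemma mean_Mid_1_1: "mean_Mid_1 1 = 2"
proof -
  have "(\<Sum>f\<in>Cstar_topmax 1. real (f (Mid 1))) = (\<Sum>f\<in>Cstar_topmax 1. 2)"
    using Cstar_topmax_Mid_last[of _ 1] by (intro sum.cong) simp_all
  then show ?thesis
    using card_Cstar_topmax_pos[of 1] by (simp add: mean_Mid_1_def)
qed

lemma sum_shift_from: "(\<Sum>b=1..K. shift_from b y) = K * y + min K y"
  by (induction K) (auto simp: shift_from_def)

text \<open>Each value \<open>y \<le> 2m\<close> of the cell \<open>Mid 1\<close> is shifted up by exactly \<open>y\<close> of the \<open>2m+1\<close>
  choices of the new bottom entry.\<close>

lemma mean_Mid_1_Suc:
  assumes "1 \<le> m"
  shows "mean_Mid_1 (Suc m) = (2*m+2) / (2*m+1) * mean_Mid_1 m"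
proof -
  have "(\<Sum>f\<in>Cstar_topmax (Suc m). real (f (Mid 1)))
      = (\<Sum>(g, b)\<in>Cstar_topmax m \<times> {1..2*m+1}. real (add_column m (g, b) (Mid 1)))"
    using sum.reindex_bij_betw[OF bij_betw_add_column[of m], of "\<lambda>f. real (f (Mid 1))"] by simp
  also have "\<dots> = (\<Sum>g\<in>Cstar_topmax m. \<Sum>b\<in>{1..2*m+1}. real (add_column m (g, b) (Mid 1)))"
    by (rule sum.cartesian_product[symmetric])
  also have "\<dots> = (\<Sum>g\<in>Cstar_topmax m. (2*m+2) * real (g (Mid 1)))"
  proof (rule sum.cong)
    fix g
    assume "g \<in> Cstar_topmax m"
    then have "g (Mid 1) \<le> 2*m"
      using Cstar_topmax_below_top[of g m "Mid 1"] assms by simp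
    then have shifted: "(\<Sum>b=1..2*m+1. shift_from b (g (Mid 1))) = (2*m+2) * g (Mid 1)"
      unfolding sum_shift_from by (simp add: min_def)
    have new_column: "add_column m (g, b) (Mid 1) = shift_from b (g (Mid 1))" for b
      using assms by (simp add: add_column_def)
    have "(\<Sum>b=1..2*m+1. real (add_column m (g, b) (Mid 1)))
        = real (\<Sum>b=1..2*m+1. shift_from b (g (Mid 1)))"
      by (simp only: new_column of_nat_sum)
    also have "\<dots> = (2*m+2) * real (g (Mid 1))"
      unfolding shifted by (simp add: algebra_simps)
    finally show "(\<Sum>b=1..2*m+1. real (add_column m (g, b) (Mid 1))) = (2*m+2) * real (g (Mid 1))" .
  qed simp
  finally have "(\<Sum>f\<in>Cstar_topmax (Suc m). real (f (Mid 1)))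
      = (2*m+2) * (\<Sum>g\<in>Cstar_topmax m. real (g (Mid 1)))"
    by (simp only: sum_distrib_left)
  then show ?thesis
    by (simp add: mean_Mid_1_def card_Cstar_topmax_Suc algebra_simps)
qed

lemma mean_Mid_1_le_sqrt:
  assumes "1 \<le> n"
  shows "mean_Mid_1 n \<le> 2 * sqrt n"
proof -
  have "mean_Mid_1 n ^ 2 \<le> 4 * n"
    using assms
  proof (induction n rule: dec_induct)
    case base
    show ?case
      using mean_Mid_1_1 by simp
  next
    case (step m)
    have "mean_Mid_1 (Suc m) ^ 2 = ((2*m+2) / (2*m+1)) ^ 2 * mean_Mid_1 m ^ 2"
      by (simp only: mean_Mid_1_Suc[OF step(1)] power_mult_distrib) (simp add: add.commute)
    also have "\<dots> \<le> ((2*m+2) / (2*m+1)) ^ 2 * (4 * m)"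
      using step(3) by (rule mult_left_mono) simp
    also have "\<dots> \<le> 4 * Suc m"
    proof -
      have "(2*m+2) ^ 2 * (4 * m) \<le> 4 * Suc m * (2*m+1) ^ 2"
        by (simp add: power2_eq_square algebra_simps)
      then have "real ((2*m+2) ^ 2 * (4 * m)) \<le> real (4 * Suc m * (2*m+1) ^ 2)"
        by (rule of_nat_mono)
      then show ?thesis
        by (simp add: power_divide pos_divide_le_eq)
    qed
    finally show ?case .
  qed
  then have "mean_Mid_1 n \<le> sqrt (4 * n)"
    by (rule real_le_rsqrt)
  also have "sqrt (4 * n) = 2 * sqrt n"
    by (simp add: real_sqrt_mult)
  finally show ?thesis .
qed

lemma sum_less_indicator: "(\<Sum>i=1..K. if p < i then 1 else 0) = K - (p::nat)"
proof -
  have "{1..K} \<inter> {i. p < i} = {Suc p..K}"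
    by auto
  then show ?thesis
    by (simp add: sum.If_cases)
qed

lemma sum_v_eq:
  assumes "1 \<le> n" "K \<le> 2*n+1"
  shows "(\<Sum>i=1..K. v n i) = (\<Sum>f\<in>Cstar_topmax n. K - f (Mid 1))"
proof -
  have "(\<Sum>i=1..K. v n i) = (\<Sum>i=1..K. \<Sum>f\<in>Cstar_topmax n. if f (Mid 1) < i then 1 else 0)"
    using assms by (intro sum.cong) (simp_all add: v_eq_card_Mid_1_less finite_Cstar_topmax sum.If_cases Int_def)
  also have "\<dots> = (\<Sum>f\<in>Cstar_topmax n. K - f (Mid 1))"
    by (subst sum.swap) (simp only: sum_less_indicator)
  finally show ?thesis .
qed

lemma sum_v_bounds:
  assumes "1 \<le> n" "K \<le> 2*n+1"
  shows "real K - mean_Mid_1 n \<le> (\<Sum>i=1..K. v n i) / card (Cstar_topmax n)"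
    and "(\<Sum>i=1..K. v n i) / card (Cstar_topmax n) \<le> real K"
proof -
  have C: "0 < real (card (Cstar_topmax n))"
    using card_Cstar_topmax_pos by simp
  have sum: "real (\<Sum>i=1..K. v n i) = (\<Sum>f\<in>Cstar_topmax n. real (K - f (Mid 1)))"
    using sum_v_eq[OF assms] by simp
  have "(\<Sum>f\<in>Cstar_topmax n. real K - real (f (Mid 1))) \<le> real (\<Sum>i=1..K. v n i)"
    unfolding sum by (intro sum_mono) linarith
  then have "(\<Sum>f\<in>Cstar_topmax n. real K - real (f (Mid 1))) / card (Cstar_topmax n)
      \<le> (\<Sum>i=1..K. v n i) / card (Cstar_topmax n)"
    using C by (intro divide_right_mono) simp_all
  moreover have "(\<Sum>f\<in>Cstar_topmax n. real K - real (f (Mid 1))) / card (Cstar_topmax n)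
      = real K - mean_Mid_1 n"
    using C by (simp add: mean_Mid_1_def sum_subtractf diff_divide_distrib)
  ultimately show "real K - mean_Mid_1 n \<le> (\<Sum>i=1..K. v n i) / card (Cstar_topmax n)"
    by simp
  have "real (\<Sum>i=1..K. v n i) \<le> (\<Sum>f\<in>Cstar_topmax n. real K)"
    unfolding sum by (intro sum_mono) simp
  then show "(\<Sum>i=1..K. v n i) / card (Cstar_topmax n) \<le> real K"
    using C by (simp add: field_simps)
qed

lemma sum_v_restrict:
  assumes "finite A"
  shows "(\<Sum>m\<in>A. v n m) = (\<Sum>m\<in>A \<inter> {1..2*n+1}. v n m)"
  by (rule sum.mono_neutral_right) (use assms v_eq_0 in auto)

lemma V1_coeff_eq: "V1_coeff n = real (\<Sum>m=1..2*n+1. v n m) / fact n"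
proof -
  have "{..2*n+1} \<inter> {1..2*n+1} = {1..2*n+1}"
    by auto
  then have support: "(\<Sum>m\<le>2*n+1. v n m) = (\<Sum>m=1..2*n+1. v n m)"
    by (subst sum_v_restrict) simp_all
  have "V1_coeff n = (\<Sum>m\<le>2*n+1. real (v n m)) / fact n"
    unfolding V1_coeff_def V_coeff_def by (rule sum_divide_distrib[symmetric])
  then show ?thesis
    by (simp only: of_nat_sum[symmetric] support)
qed

lemma measure_Z_law:
  assumes "finite A"
  shows "measure (Z_law n) A = real (\<Sum>m\<in>A. v n m) / real (\<Sum>m=1..2*n+1. v n m)"
proof -
  have prob: "V_coeff n m / V1_coeff n = real (v n m) / real (\<Sum>m=1..2*n+1. v n m)" for m
    by (simp add: V1_coeff_eq V_coeff_def)
  have nonneg: "0 \<le> V_coeff n m / V1_coeff n" for m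
    unfolding prob by (rule divide_nonneg_nonneg) (rule of_nat_0_le_iff)+
  have "emeasure (Z_law n) A
      = (\<integral>\<^sup>+m. ennreal (V_coeff n m / V1_coeff n) * indicator A m \<partial>count_space UNIV)"
    unfolding Z_law_def by (rule emeasure_density) auto
  also have "\<dots> = (\<integral>\<^sup>+m. ennreal (V_coeff n m / V1_coeff n) \<partial>count_space A)"
    by (rule nn_integral_count_space_indicator[symmetric]) simp
  also have "\<dots> = (\<Sum>m\<in>A. ennreal (V_coeff n m / V1_coeff n))"
    by (rule nn_integral_count_space_finite[OF assms])
  also have "\<dots> = ennreal (\<Sum>m\<in>A. V_coeff n m / V1_coeff n)"
    using nonneg by (simp add: sum_nonneg)
  finally have "measure (Z_law n) A = (\<Sum>m\<in>A. V_coeff n m / V1_coeff n)"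
    using nonneg by (simp add: measure_def sum_nonneg)
  then show ?thesis
    by (simp add: prob sum_divide_distrib)
qed

lemma cdf_Z_scaled_law_eq_measure:
  "cdf (Z_scaled_law n) x = measure (Z_law n) {m. real m / (2 * real n) \<le> x}"
proof -
  have "cdf (Z_scaled_law n) x = measure (Z_law n) ((\<lambda>m. real m / (2 * real n)) -` {..x} \<inter> space (Z_law n))"
    unfolding cdf_def2 Z_scaled_law_def by (rule measure_distr) (simp_all add: Z_law_def)
  then show ?thesis
    by (simp add: Z_law_def vimage_def)
qed

lemma cdf_Z_scaled_law_neg: "x < 0 \<Longrightarrow> cdf (Z_scaled_law n) x = 0"
proof -
  assume "x < 0"
  then have "{m. real m / (2 * real n) \<le> x} = {}"
    by (auto simp: not_le intro: less_le_trans)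
  then show ?thesis
    by (simp add: cdf_Z_scaled_law_eq_measure)
qed

lemma cdf_Z_scaled_law:
  assumes n: "1 \<le> n" and x: "0 \<le> x"
  shows "cdf (Z_scaled_law n) x
    = real (\<Sum>m=1..min (nat \<lfloor>2 * n * x\<rfloor>) (2*n+1). v n m) / real (\<Sum>m=1..2*n+1. v n m)"
proof -
  have "real m / (2 * real n) \<le> x \<longleftrightarrow> m \<le> nat \<lfloor>2 * n * x\<rfloor>" for m
  proof -
    have "real m / (2 * real n) \<le> x \<longleftrightarrow> real m \<le> 2 * n * x"
      using n by (simp add: pos_divide_le_eq mult.commute)
    also have "\<dots> \<longleftrightarrow> m \<le> nat \<lfloor>2 * n * x\<rfloor>"
      using le_floor_iff[of "int m" "2 * n * x"] le_nat_iff[of "\<lfloor>2 * n * x\<rfloor>" m] x by simp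
    finally show ?thesis .
  qed
  then have "{m. real m / (2 * real n) \<le> x} = {..nat \<lfloor>2 * n * x\<rfloor>}"
    by auto
  then have "cdf (Z_scaled_law n) x = measure (Z_law n) {..nat \<lfloor>2 * n * x\<rfloor>}"
    by (simp only: cdf_Z_scaled_law_eq_measure)
  also have "\<dots> = real (\<Sum>m\<le>nat \<lfloor>2 * n * x\<rfloor>. v n m) / real (\<Sum>m=1..2*n+1. v n m)"
    by (rule measure_Z_law) simp
  also have "(\<Sum>m\<le>nat \<lfloor>2 * n * x\<rfloor>. v n m) = (\<Sum>m=1..min (nat \<lfloor>2 * n * x\<rfloor>) (2*n+1). v n m)"
  proof -
    have "{..nat \<lfloor>2 * n * x\<rfloor>} \<inter> {1..2*n+1} = {1..min (nat \<lfloor>2 * n * x\<rfloor>) (2*n+1)}"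
      by auto
    then show ?thesis
      by (subst sum_v_restrict) simp_all
  qed
  finally show ?thesis .
qed

lemma cdf_uniform_unit_interval:
  "cdf (uniform_measure lborel {0..1::real}) x = (if x < 0 then 0 else min x 1)"
proof -
  have "cdf (uniform_measure lborel {0..1::real}) x = measure lborel ({0..1} \<inter> {..x})"
    unfolding cdf_def2 by (subst measure_uniform_measure) auto
  also have "\<dots> = (if x < 0 then 0 else min x 1)"
  proof (cases "x < 0")
    case False
    then have "{0..1} \<inter> {..x} = {0..min x 1}"
      by auto
    with False show ?thesis
      by simp
  qed simp
  finally show ?thesis .
qed

lemma moment_uniform_unit_interval:
  "(\<integral>x. x ^ r \<partial>uniform_measure lborel {0..1::real}) = 1 / (real r + 1)"
proof -
  have "uniform_measure lborel {0..1::real} = density lborel (\<lambda>x. ennreal (indicator {0..1} x))"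
    unfolding uniform_measure_def
    by (intro arg_cong[where f = "density lborel"]) (auto simp: indicator_def)
  then have "(\<integral>x. x ^ r \<partial>uniform_measure lborel {0..1::real}) = (\<integral>x. x ^ r * indicator {0..1} x \<partial>lborel)"
    by (simp add: integral_density mult.commute)
  also have "\<dots> = 1 / (real r + 1)"
    by (subst integral_power) auto
  finally show ?thesis .
qed

lemma quotient_bounds:
  fixes p t s K N :: real
  assumes p: "K - s \<le> p" "0 \<le> p" "p \<le> K" and t: "N - s \<le> t" "t \<le> N" and s: "0 \<le> s" "s < N"
  shows "K / N - s / N \<le> p / t" and "p / t \<le> (K / N) / (1 - s / N)"
proof -
  have "0 < t"
    using t s by linarith
  have "K / N - s / N = (K - s) / N"
    by (simp add: diff_divide_distrib)
  also have "\<dots> \<le> p / N"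
    using p s by (intro divide_right_mono) auto
  also have "\<dots> \<le> p / t"
    using p t \<open>0 < t\<close> by (intro divide_left_mono) auto
  finally show "K / N - s / N \<le> p / t" .
  have "p / t \<le> K / t"
    using p \<open>0 < t\<close> by (intro divide_right_mono) auto
  also have "\<dots> \<le> K / (N - s)"
    using p t s by (intro divide_left_mono) auto
  also have "\<dots> = (K / N) / (1 - s / N)"
    using s by (simp add: field_simps)
  finally show "p / t \<le> (K / N) / (1 - s / N)" .
qed

lemma two_sqrt_less: "1 \<le> n \<Longrightarrow> 2 * sqrt (real n) < 2 * n + 1"
proof -
  assume "1 \<le> n"
  then have "sqrt (real n) * 1 \<le> sqrt (real n) * sqrt (real n)"
    by (intro mult_left_mono) auto
  then show ?thesis
    by simp
qed

lemma cdf_Z_scaled_law_bounds: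
  fixes x :: real
  assumes n: "1 \<le> n" and x: "0 \<le> x"
  defines "K \<equiv> min (nat \<lfloor>2 * n * x\<rfloor>) (2*n+1)"
  shows "real K / (2 * real n + 1) - mean_Mid_1 n / (2 * real n + 1) \<le> cdf (Z_scaled_law n) x"
    and "cdf (Z_scaled_law n) x \<le> (real K / (2 * real n + 1)) / (1 - mean_Mid_1 n / (2 * real n + 1))"
proof -
  define C where "C = real (card (Cstar_topmax n))"
  define p where "p = real (\<Sum>m=1..K. v n m) / C"
  define t where "t = real (\<Sum>m=1..2*n+1. v n m) / C"
  have "0 < C"
    using card_Cstar_topmax_pos by (simp add: C_def)
  then have cdf: "cdf (Z_scaled_law n) x = p / t"
    using cdf_Z_scaled_law[OF n x] by (simp add: p_def t_def K_def)
  have mean: "mean_Mid_1 n < 2 * real n + 1"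
    using mean_Mid_1_le_sqrt[OF n] two_sqrt_less[OF n] by linarith
  have p: "real K - mean_Mid_1 n \<le> p" "p \<le> real K"
    using sum_v_bounds[OF n, of K] by (simp_all add: p_def C_def K_def)
  have t: "2 * real n + 1 - mean_Mid_1 n \<le> t" "t \<le> 2 * real n + 1"
    using sum_v_bounds[OF n, of "2*n+1"] by (simp_all add: t_def C_def)
  have "0 \<le> p"
    using \<open>0 < C\<close> unfolding p_def by (intro divide_nonneg_nonneg) (simp_all add: sum_nonneg)
  note bounds = quotient_bounds[OF p(1) \<open>0 \<le> p\<close> p(2) t mean_Mid_1_nonneg mean]
  show "real K / (2 * real n + 1) - mean_Mid_1 n / (2 * real n + 1) \<le> cdf (Z_scaled_law n) x"
    unfolding cdf by (rule bounds(1))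
  show "cdf (Z_scaled_law n) x \<le> (real K / (2 * real n + 1)) / (1 - mean_Mid_1 n / (2 * real n + 1))"
    unfolding cdf by (rule bounds(2))
qed

lemma mean_Mid_1_ratio_tendsto_0: "(\<lambda>n. mean_Mid_1 n / (2 * real n + 1)) \<longlonglongrightarrow> 0"
proof (rule tendsto_sandwich[of "\<lambda>_. 0" _ _ "\<lambda>n. 2 * sqrt (real n) / (2 * real n + 1)"])
  show "\<forall>\<^sub>F n in sequentially. 0 \<le> mean_Mid_1 n / (2 * real n + 1)"
    using mean_Mid_1_nonneg by simp
  show "\<forall>\<^sub>F n in sequentially. mean_Mid_1 n / (2 * real n + 1) \<le> 2 * sqrt (real n) / (2 * real n + 1)"
    using eventually_ge_at_top[of 1]
    by eventually_elim (simp add: divide_right_mono mean_Mid_1_le_sqrt)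
  show "(\<lambda>n. 2 * sqrt (real n) / (2 * real n + 1)) \<longlonglongrightarrow> 0"
    by real_asymp
qed simp

lemma real_nat_floor_bounds:
  fixes y :: real
  assumes "0 \<le> y"
  shows "y - 1 \<le> real (nat \<lfloor>y\<rfloor>)" and "real (nat \<lfloor>y\<rfloor>) \<le> y"
proof -
  have "real (nat \<lfloor>y\<rfloor>) = of_int \<lfloor>y\<rfloor>"
    using assms by simp
  then show "y - 1 \<le> real (nat \<lfloor>y\<rfloor>)" and "real (nat \<lfloor>y\<rfloor>) \<le> y"
    by linarith+
qed

lemma scaled_floor_tendsto:
  fixes x :: real
  assumes x: "0 \<le> x"
  shows "(\<lambda>n. real (min (nat \<lfloor>2 * n * x\<rfloor>) (2*n+1)) / (2 * real n + 1)) \<longlonglongrightarrow> min x 1"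
proof -
  have ratio: "(\<lambda>n. 2 * real n / (2 * real n + 1)) \<longlonglongrightarrow> 1" "(\<lambda>n. 1 / (2 * real n + 1)) \<longlonglongrightarrow> 0"
    by real_asymp+
  have "(\<lambda>n. real (nat \<lfloor>2 * n * x\<rfloor>) / (2 * real n + 1)) \<longlonglongrightarrow> x"
  proof (rule tendsto_sandwich[of "\<lambda>n. x * (2 * real n / (2 * real n + 1)) - 1 / (2 * real n + 1)" _ _
        "\<lambda>n. x * (2 * real n / (2 * real n + 1))"])
    show "\<forall>\<^sub>F n in sequentially. x * (2 * real n / (2 * real n + 1)) - 1 / (2 * real n + 1) \<le> real (nat \<lfloor>2 * n * x\<rfloor>) / (2 * real n + 1)"
    proof (intro always_eventually allI)
      fix n :: nat
      have "x * (2 * real n / (2 * real n + 1)) - 1 / (2 * real n + 1) = (2 * n * x - 1) / (2 * real n + 1)"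
        by (simp add: diff_divide_distrib ac_simps)
      also have "\<dots> \<le> real (nat \<lfloor>2 * n * x\<rfloor>) / (2 * real n + 1)"
        using real_nat_floor_bounds(1)[of "2 * n * x"] x by (intro divide_right_mono) auto
      finally show "x * (2 * real n / (2 * real n + 1)) - 1 / (2 * real n + 1) \<le> real (nat \<lfloor>2 * n * x\<rfloor>) / (2 * real n + 1)" .
    qed
    show "\<forall>\<^sub>F n in sequentially. real (nat \<lfloor>2 * n * x\<rfloor>) / (2 * real n + 1) \<le> x * (2 * real n / (2 * real n + 1))"
    proof (intro always_eventually allI)
      fix n :: nat
      have "real (nat \<lfloor>2 * n * x\<rfloor>) / (2 * real n + 1) \<le> (2 * n * x) / (2 * real n + 1)"
        using real_nat_floor_bounds(2)[of "2 * n * x"] x by (intro divide_right_mono) auto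
      then show "real (nat \<lfloor>2 * n * x\<rfloor>) / (2 * real n + 1) \<le> x * (2 * real n / (2 * real n + 1))"
        by (simp add: ac_simps)
    qed
    show "(\<lambda>n. x * (2 * real n / (2 * real n + 1)) - 1 / (2 * real n + 1)) \<longlonglongrightarrow> x"
      using tendsto_diff[OF tendsto_mult[OF tendsto_const ratio(1)] ratio(2)] by simp
    show "(\<lambda>n. x * (2 * real n / (2 * real n + 1))) \<longlonglongrightarrow> x"
      using tendsto_mult[OF tendsto_const ratio(1)] by simp
  qed
  then have "(\<lambda>n. min (real (nat \<lfloor>2 * n * x\<rfloor>) / (2 * real n + 1)) 1) \<longlonglongrightarrow> min x 1"
    by (intro tendsto_min tendsto_const)
  then show ?thesis
    by (simp add: of_nat_min min_divide_distrib_right add.commute)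
qed

lemma cdf_Z_scaled_law_tendsto:
  "(\<lambda>n. cdf (Z_scaled_law n) x) \<longlonglongrightarrow> (if x < 0 then 0 else min x 1)"
proof (cases "x < 0")
  case True
  then show ?thesis
    by (simp add: cdf_Z_scaled_law_neg)
next
  case False
  define K where "K n = real (min (nat \<lfloor>2 * n * x\<rfloor>) (2*n+1)) / (2 * real n + 1)" for n :: nat
  define s where "s n = mean_Mid_1 n / (2 * real n + 1)" for n :: nat
  have K: "K \<longlonglongrightarrow> min x 1" and s: "s \<longlonglongrightarrow> 0"
    unfolding K_def s_def using False scaled_floor_tendsto mean_Mid_1_ratio_tendsto_0 by simp_all
  show ?thesis
  proof (rule tendsto_sandwich[of "\<lambda>n. K n - s n" _ _ "\<lambda>n. K n / (1 - s n)"])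
    show "\<forall>\<^sub>F n in sequentially. K n - s n \<le> cdf (Z_scaled_law n) x"
      using eventually_ge_at_top[of 1]
    proof eventually_elim
      case (elim n)
      then show ?case
        using cdf_Z_scaled_law_bounds(1)[OF elim] False by (simp add: K_def s_def)
    qed
    show "\<forall>\<^sub>F n in sequentially. cdf (Z_scaled_law n) x \<le> K n / (1 - s n)"
      using eventually_ge_at_top[of 1]
    proof eventually_elim
      case (elim n)
      then show ?case
        using cdf_Z_scaled_law_bounds(2)[OF elim] False by (simp add: K_def s_def)
    qed
    show "(\<lambda>n. K n - s n) \<longlonglongrightarrow> (if x < 0 then 0 else min x 1)"
      using tendsto_diff[OF K s] False by simp
    show "(\<lambda>n. K n / (1 - s n)) \<longlonglongrightarrow> (if x < 0 then 0 else min x 1)"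
      using tendsto_divide[OF K tendsto_diff[OF tendsto_const[of "1::real"] s]] False by simp
  qed
qed

theorem theorem21:
  shows "weak_conv_m (\<lambda>n. Z_scaled_law (Suc n)) (uniform_measure lborel {0..1::real})
    \<and> (\<forall>r::nat. (\<integral>x. x ^ r \<partial>uniform_measure lborel {0..1::real}) = 1 / (real r + 1))"
proof
  show "weak_conv_m (\<lambda>n. Z_scaled_law (Suc n)) (uniform_measure lborel {0..1::real})"
    unfolding weak_conv_m_def weak_conv_def cdf_uniform_unit_interval
    using LIMSEQ_Suc[OF cdf_Z_scaled_law_tendsto] by blast
  show "\<forall>r::nat. (\<integral>x. x ^ r \<partial>uniform_measure lborel {0..1::real}) = 1 / (real r + 1)"
    using moment_uniform_unit_interval by blast
qed

end
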